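(* Let $\psi$ be a colouring, let $d\in\mathbb Z$, write $d^+=\max(d,0)$, and let $\xi\in\mathcal C_{d^+}$ be regular and summable. Then the series $\sum_{a\ge d^+}(X^-)^{a-d}(X^+)^a\xi^a(H)$ converges, for the $h$-adic topology, to a unique element $x\in U_h(\psi)$. Moreover $x$ is of degree $d$, and $\psi\ltimes\xi=\psi(x)$.
   Context: $\mathbb k$ is a field of characteristic zero, and $\mathbb k[[h]]$ is the ring of formal power series over $\mathbb k$. For a $\mathbb k$-vector space $V_0$, $V_0[[h]]$ denotes the module of formal series $\sum_{m\ge0}v_mh^m$ with $v_m\in V_0$. $\mathfrak a$ is the Lie algebra over $\mathbb k$ generated by $H,X^-,X^+$ subject to $[H,X^\pm]=\pm2X^\pm$. We set $U_h(\mathfrak a):=U(\mathfrak a)[[h]]$. A colouring is a sequence $\psi=(\psi^k)_{k\ge1}$ of functions $\psi^k:\mathbb Z\to\mathbb k[[h]]$ satisfying: - (C1) $\psi^k(n)\equiv k(n-k+1)\bmod h$; - (C2) $\psi^{n+1}(n)=0$ for all $n\ge0$; - (C3) $\psi^{n+k+1}(n)=\psi^k(-n-2)$ for all $k\ge1$ and all $n\ge0$. $V_h(n,\psi)$ is the representation of $U_h(\mathfrak a)$ on $(\bigoplus_{k\ge0}\mathbb k b_k)[[h]]$ with the following action: - $H.b_k=(n-2k)b_k$; - $X^-.b_k=b_{k+1}$; - $X^+.b_0=0$, and $X^+.b_k=\psi^k(n)b_{k-1}$ for $k\ge1$. $U_h(\psi)$ is the quotient of $U_h(\mathfrak a)$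 by the two-sided ideal of elements that act by zero on $V_h(n,\psi)$ for every $n\in\mathbb Z$. Sequences. For $d\in\mathbb N$, $\mathcal C_d$ is the $\mathbb k[[h]]$-module of sequences $f=(f^k)_{k\ge d}$ of functions $f^k:\mathbb Z\to\mathbb k[[h]]$. We write $f^k(n)=\sum_{m\ge0}f^k_m(n)h^m$ with $f^k_m:\mathbb Z\to\mathbb k$. - $f$ is summable if $f^k\to0$ $h$-adically, i.e. for each $m$ one has $f^k_m\equiv0$ for all sufficiently large $k$. - $f$ is regular if each $f^k_m$ is (the restriction of) a polynomial function of $n$, and for each $m$ the degree of $f^k_m$ is bounded independently of $k$. - For a regular $\xi$, set $\xi^a(H):=\sum_m\xi^a_m(H)h^m\in\mathbb k[H][[h]]$, viewed in $U_h(\psi)$. For a colouring $\psi$ and $\xi\in\mathcal C_d$ with $d\ge0$, define $\psi\ltimes\xi\in\mathcal C_d$ by $$(\psi\ltimes\xi)^k(n)=\sum_{a=d}^k\Big(\prod_{b=k-a+1}^k\psi^b(n)\Big)\xi^a(n-2k)\qquad(k\ge d),$$ where the empty product is $1$. Degree. An element $x\in U_h(\psi)$ is of degree $d\in\mathbb Z$ if, for every $n\in\mathbb Z$, two conditions hold in $V_h(n,\psi)$: - $x.b_k=0$ for $0\le k<d^+$; - $x.b_k=\psi(x)^k(n)\,b_{k-d}$ for some $\psi(x)^k(n)\in\mathbb k[[h]]$, for every $k\ge d^+$. In that case $\psi(x):=(\psi(x)^k)_{k\ge d^+}\in\mathcal C_{d^+}$. *)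

theory Defs
  imports "HOL-Computational_Algebra.Formal_Power_Series" "HOL-Computational_Algebra.Polynomial"
begin

text \<open>k[[h]] is modelled by the type 'k fps (formal power series, fps_X = h).\<close>

text \<open>psi k n = psi^k(n); the value at k = 0 is irrelevant.\<close>
definition colouring :: "(nat \<Rightarrow> int \<Rightarrow> 'k::field_char_0 fps) \<Rightarrow> bool" where
  "colouring \<psi> \<longleftrightarrow>
     (\<forall>k n. k \<ge> 1 \<longrightarrow> fps_nth (\<psi> k n) 0 = of_int (int k * (n - int k + 1))) \<and>
     (\<forall>n::nat. \<psi> (n + 1) (int n) = 0) \<and>
     (\<forall>k n::nat. k \<ge> 1 \<longrightarrow> \<psi> (n + k + 1) (int n) = \<psi> k (- int n - 2))"

datatype gen = Hg | Xm | Xp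

text \<open>A word [g1,...,gr] stands for the product g1 g2 ... gr.  An element of
  the (completed) free algebra on H, X^-, X^+ over k[[h]] is a function from words to
  k[[h]] such that, for every m, only finitely many words have nonzero h^m-coefficient.
  Since the relations of a hold in every V_h(n,psi), the image of this free algebra in
  the operators on all V_h(n,psi) coincides with the image of U_h(a), i.e. with U_h(psi).\<close>

definition uh_elem :: "(gen list \<Rightarrow> 'k::field_char_0 fps) \<Rightarrow> bool" where
  "uh_elem c \<longleftrightarrow> (\<forall>m. finite {w. fps_nth (c w) m \<noteq> 0})"

definition uh_word :: "gen list \<Rightarrow> gen list \<Rightarrow> 'k::field_char_0 fps" where
  "uh_word w = (\<lambda>v. if v = w then 1 else 0)"

definition uh_mult :: "(gen list \<Rightarrow> 'k::field_char_0 fps) \<Rightarrow> (gen list \<Rightarrow> 'k fps) \<Rightarrow> gen list \<Rightarrow> 'k fps" where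
  "uh_mult c1 c2 = (\<lambda>w. \<Sum>i\<le>length w. c1 (take i w) * c2 (drop i w))"

text \<open>Action of a generator on a monomial vector c * b_k of V_h(n,psi).\<close>
fun gen_act :: "(nat \<Rightarrow> int \<Rightarrow> 'k::field_char_0 fps) \<Rightarrow> int \<Rightarrow> gen \<Rightarrow> 'k fps \<times> nat \<Rightarrow> 'k fps \<times> nat" where
  "gen_act \<psi> n Hg (c, k) = (c * of_int (n - 2 * int k), k)"
| "gen_act \<psi> n Xm (c, k) = (c, Suc k)"
| "gen_act \<psi> n Xp (c, k) = (if k = 0 then (0, 0) else (c * \<psi> k n, k - 1))"

definition word_act :: "(nat \<Rightarrow> int \<Rightarrow> 'k::field_char_0 fps) \<Rightarrow> int \<Rightarrow> gen list \<Rightarrow> nat \<Rightarrow> 'k fps \<times> nat" where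
  "word_act \<psi> n w k = foldr (gen_act \<psi> n) w (1, k)"

text \<open>uh_mat psi c n k l = coefficient of b_l in c.b_k computed in V_h(n,psi).
  An element of U_h(psi) is determined by these coefficients (the action is
  k[[h]]-linear and h-adically continuous).\<close>
definition uh_mat :: "(nat \<Rightarrow> int \<Rightarrow> 'k::field_char_0 fps) \<Rightarrow> (gen list \<Rightarrow> 'k fps) \<Rightarrow> int \<Rightarrow> nat \<Rightarrow> nat \<Rightarrow> 'k fps" where
  "uh_mat \<psi> c n k l = Abs_fps (\<lambda>N.
     \<Sum>w\<in>{w. \<exists>i\<le>N. fps_nth (c w) i \<noteq> 0}.
       (if snd (word_act \<psi> n w k) = l then fps_nth (c w * fst (word_act \<psi> n w k)) N else 0))"

definition Uh_psi :: "(nat \<Rightarrow> int \<Rightarrow> 'k::field_char_0 fps) \<Rightarrow> (int \<Rightarrow> nat \<Rightarrow> nat \<Rightarrow> 'k fps) set" where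
  "Uh_psi \<psi> = {uh_mat \<psi> c | c. uh_elem c}"

definition hadic_conv :: "(nat \<Rightarrow> int \<Rightarrow> 'k::field_char_0 fps) \<Rightarrow> (nat \<Rightarrow> int \<Rightarrow> nat \<Rightarrow> nat \<Rightarrow> 'k fps) \<Rightarrow> (int \<Rightarrow> nat \<Rightarrow> nat \<Rightarrow> 'k fps) \<Rightarrow> bool" where
  "hadic_conv \<psi> S x \<longleftrightarrow>
     (\<forall>m. \<exists>N0. \<forall>N\<ge>N0. \<exists>y\<in>Uh_psi \<psi>. \<forall>n k l. x n k l - S N n k l = fps_X ^ m * y n k l)"

text \<open>xi a n = xi^a(n); elements of C_d only use indices a >= d.\<close>
definition summable_seq :: "nat \<Rightarrow> (nat \<Rightarrow> int \<Rightarrow> 'k::field_char_0 fps) \<Rightarrow> bool" where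
  "summable_seq d \<xi> \<longleftrightarrow> (\<forall>m. \<exists>K. \<forall>a\<ge>max K d. \<forall>n. fps_nth (\<xi> a n) m = 0)"

definition regular_seq :: "nat \<Rightarrow> (nat \<Rightarrow> int \<Rightarrow> 'k::field_char_0 fps) \<Rightarrow> bool" where
  "regular_seq d \<xi> \<longleftrightarrow> (\<forall>m. \<exists>D. \<forall>a\<ge>d. \<exists>P :: 'k poly.
      degree P \<le> D \<and> (\<forall>n. fps_nth (\<xi> a n) m = poly P (of_int n)))"

text \<open>The polynomial xi^a_m (unique, as k has characteristic zero).\<close>
definition xi_poly :: "(nat \<Rightarrow> int \<Rightarrow> 'k::field_char_0 fps) \<Rightarrow> nat \<Rightarrow> nat \<Rightarrow> 'k poly" where
  "xi_poly \<xi> a m = (SOME P. \<forall>n. fps_nth (\<xi> a n) m = poly P (of_int n))"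

text \<open>xi^a(H) = sum_m xi^a_m(H) h^m, as an element of U_h(a).\<close>
definition xi_H :: "(nat \<Rightarrow> int \<Rightarrow> 'k::field_char_0 fps) \<Rightarrow> nat \<Rightarrow> gen list \<Rightarrow> 'k fps" where
  "xi_H \<xi> a = (\<lambda>w. if w = replicate (length w) Hg
                    then Abs_fps (\<lambda>m. coeff (xi_poly \<xi> a m) (length w)) else 0)"

definition partial_sum :: "int \<Rightarrow> (nat \<Rightarrow> int \<Rightarrow> 'k::field_char_0 fps) \<Rightarrow> nat \<Rightarrow> gen list \<Rightarrow> 'k fps" where
  "partial_sum d \<xi> N = (\<lambda>w. \<Sum>a\<in>{nat (max d 0)..N}.
      uh_mult (uh_word (replicate (nat (int a - d)) Xm @ replicate a Xp)) (xi_H \<xi> a) w)"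

definition ltimes :: "(nat \<Rightarrow> int \<Rightarrow> 'k::field_char_0 fps) \<Rightarrow> nat \<Rightarrow> (nat \<Rightarrow> int \<Rightarrow> 'k fps) \<Rightarrow> nat \<Rightarrow> int \<Rightarrow> 'k fps" where
  "ltimes \<psi> d \<xi> k n = (\<Sum>a\<in>{d..k}. (\<Prod>b\<in>{k - a + 1..k}. \<psi> b n) * \<xi> a (n - 2 * int k))"

definition of_degree :: "(int \<Rightarrow> nat \<Rightarrow> nat \<Rightarrow> 'k::field_char_0 fps) \<Rightarrow> int \<Rightarrow> bool" where
  "of_degree x d \<longleftrightarrow> (\<forall>n k l.
     (k < nat (max d 0) \<longrightarrow> x n k l = 0) \<and>
     (k \<ge> nat (max d 0) \<and> int l \<noteq> int k - d \<longrightarrow> x n k l = 0))"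

definition psi_of :: "(int \<Rightarrow> nat \<Rightarrow> nat \<Rightarrow> 'k::field_char_0 fps) \<Rightarrow> int \<Rightarrow> nat \<Rightarrow> int \<Rightarrow> 'k fps" where
  "psi_of x d k n = x n k (nat (int k - d))"

end

theory Submission
  imports Defs
begin

text \<open>The term of index a of the series only involves words of length at least a, so on each
  fixed word the series is a finite sum; this defines the limit coefficientwise in the free
  algebra.  Summability of \<xi> makes every h-coefficient of the limit agree with that of the
  partial sums S_N for N large, which is h-adic convergence, and such limits are unique because
  an element divisible by every power of h is zero.  Finally, in V_h(n,\<psi>) the word
  (X^-)^(a-d) (X^+)^a H^j sends b_k to (n-2k)^j \<psi>^k(n) \<psi>^(k-1)(n) ... \<psi>^(k-a+1)(n) b_(k-d)
  when a \<le> k and kills it otherwise, so summing over a and j gives (\<psi> \<ltimes> \<xi>)^k(n).\<close>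

unbundle fps_syntax

lemma uh_mat_nth_superset:
  assumes "finite A" "{w. \<exists>i\<le>N. c w $ i \<noteq> 0} \<subseteq> A"
  shows "uh_mat \<psi> c n k l $ N = (\<Sum>w\<in>A. if snd (word_act \<psi> n w k) = l
            then (c w * fst (word_act \<psi> n w k)) $ N else 0)"
  unfolding uh_mat_def fps_nth_Abs_fps
  by (rule sum.mono_neutral_left[OF assms]) (auto simp: fps_mult_nth intro!: sum.neutral)

lemma uh_elem_support_finite:
  assumes "uh_elem c"
  shows "finite {w. \<exists>i\<le>N. c w $ i \<noteq> 0}"
proof -
  have "{w. \<exists>i\<le>N. c w $ i \<noteq> 0} = (\<Union>i\<le>N. {w. c w $ i \<noteq> 0})" by auto
  thus ?thesis using assms by (auto simp: uh_elem_def)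
qed

lemma uh_mat_add_fps_X_power_mult:
  assumes "uh_elem c1" "uh_elem c2"
  shows "uh_mat \<psi> (\<lambda>w. c1 w + fps_X ^ m * c2 w) n k l
           = uh_mat \<psi> c1 n k l + fps_X ^ m * uh_mat \<psi> c2 n k l"
proof (rule fps_ext)
  fix N
  define A where "A = {w. \<exists>i\<le>N. c1 w $ i \<noteq> 0} \<union> {w. \<exists>i\<le>N. c2 w $ i \<noteq> 0}"
  have A: "finite A"
    using uh_elem_support_finite[OF assms(1)] uh_elem_support_finite[OF assms(2)] by (simp add: A_def)
  let ?f = "\<lambda>w. fst (word_act \<psi> n w k)" and ?s = "\<lambda>w. snd (word_act \<psi> n w k)"
  have "uh_mat \<psi> (\<lambda>w. c1 w + fps_X ^ m * c2 w) n k l $ N =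
     (\<Sum>w\<in>A. if ?s w = l then ((c1 w + fps_X ^ m * c2 w) * ?f w) $ N else 0)"
    by (rule uh_mat_nth_superset[OF A]) (auto simp: A_def fps_X_power_mult_nth split: if_splits)
  also have "\<dots> = (\<Sum>w\<in>A. if ?s w = l then (c1 w * ?f w) $ N else 0)
     + (\<Sum>w\<in>A. if ?s w = l then (fps_X ^ m * (c2 w * ?f w)) $ N else 0)"
    by (subst sum.distrib[symmetric]) (auto intro!: sum.cong simp: distrib_right mult.assoc)
  also have "(\<Sum>w\<in>A. if ?s w = l then (c1 w * ?f w) $ N else 0) = uh_mat \<psi> c1 n k l $ N"
    by (rule uh_mat_nth_superset[symmetric, OF A]) (auto simp: A_def)
  also have "(\<Sum>w\<in>A. if ?s w = l then (fps_X ^ m * (c2 w * ?f w)) $ N else 0)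
      = (fps_X ^ m * uh_mat \<psi> c2 n k l) $ N"
  proof (cases "N < m")
    case False
    have "(fps_X ^ m * uh_mat \<psi> c2 n k l) $ N
        = (\<Sum>w\<in>A. if ?s w = l then (c2 w * ?f w) $ (N - m) else 0)"
      using False by (simp add: fps_X_power_mult_nth) (rule uh_mat_nth_superset[OF A], auto simp: A_def)
    thus ?thesis using False by (auto intro!: sum.cong simp: fps_X_power_mult_nth)
  qed (auto intro!: sum.neutral simp: fps_X_power_mult_nth)
  finally show "uh_mat \<psi> (\<lambda>w. c1 w + fps_X ^ m * c2 w) n k l $ N
      = (uh_mat \<psi> c1 n k l + fps_X ^ m * uh_mat \<psi> c2 n k l) $ N"
    by simp
qed

lemma hadic_conv_unique:
  assumes "hadic_conv \<psi> S x" "hadic_conv \<psi> S x'"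
  shows "x = x'"
proof (intro ext fps_ext)
  fix n k l i
  obtain N0 where N0: "\<forall>N\<ge>N0. \<exists>y\<in>Uh_psi \<psi>. \<forall>n k l. x n k l - S N n k l = fps_X ^ Suc i * y n k l"
    using assms(1) unfolding hadic_conv_def by blast
  obtain N1 where N1: "\<forall>N\<ge>N1. \<exists>y\<in>Uh_psi \<psi>. \<forall>n k l. x' n k l - S N n k l = fps_X ^ Suc i * y n k l"
    using assms(2) unfolding hadic_conv_def by blast
  obtain y y' where
    "\<forall>n k l. x n k l - S (max N0 N1) n k l = fps_X ^ Suc i * y n k l"
    "\<forall>n k l. x' n k l - S (max N0 N1) n k l = fps_X ^ Suc i * y' n k l"
    using N0[rule_format, of "max N0 N1"] N1[rule_format, of "max N0 N1"] by auto
  hence "(x n k l - S (max N0 N1) n k l) $ i = 0" "(x' n k l - S (max N0 N1) n k l) $ i = 0"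
    by (simp_all add: fps_X_power_mult_nth del: power_Suc)
  thus "x n k l $ i = x' n k l $ i" by simp
qed

lemma fps_mult_nth_cong:
  assumes "\<And>i. i \<le> N \<Longrightarrow> F $ i = F' $ i"
  shows "(P * F) $ N = (P * F') $ N"
  unfolding fps_mult_nth by (rule sum.cong) (auto simp: assms)

lemma poly_eqI_of_int:
  fixes P Q :: "'k::field_char_0 poly"
  assumes "\<And>n::int. poly P (of_int n) = poly Q (of_int n)"
  shows "P = Q"
proof (rule ccontr)
  assume "P \<noteq> Q"
  hence "finite {x. poly (P - Q) x = 0}" by (intro poly_roots_finite) simp
  moreover have "range (of_int :: int \<Rightarrow> 'k) \<subseteq> {x. poly (P - Q) x = 0}" using assms by auto
  ultimately have "finite (range (of_int :: int \<Rightarrow> 'k))" using finite_subset by blast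
  moreover have "inj (of_int :: int \<Rightarrow> 'k)" by (auto simp: inj_on_def)
  ultimately show False using finite_imageD by fastforce
qed

lemma foldr_gen_act_replicate_Hg:
  "foldr (gen_act \<psi> n) (replicate j Hg) (c, k) = (c * of_int (n - 2 * int k) ^ j, k)"
  by (induction j) (simp_all add: mult.assoc power_Suc2)

lemma foldr_gen_act_replicate_Xm:
  "foldr (gen_act \<psi> n) (replicate p Xm) (c, k) = (c, k + p)"
  by (induction p) auto

lemma foldr_gen_act_replicate_Xp:
  "foldr (gen_act \<psi> n) (replicate a Xp) (c, k) =
     (if a \<le> k then (c * (\<Prod>b\<in>{k - a + 1..k}. \<psi> b n), k - a) else (0, 0))"
proof (induction a)
  case (Suc a)
  show ?case
  proof (cases "Suc a \<le> k")
    case True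
    have "(\<Prod>b\<in>{k - a..k}. \<psi> b n) = \<psi> (k - a) n * (\<Prod>b\<in>{Suc (k - a)..k}. \<psi> b n)"
      by (rule prod.atLeast_Suc_atMost) simp
    hence "(\<Prod>b\<in>{k - Suc a + 1..k}. \<psi> b n) = (\<Prod>b\<in>{k - a + 1..k}. \<psi> b n) * \<psi> (k - a) n"
      using True by (simp add: Suc_diff_Suc mult.commute)
    thus ?thesis using True Suc.IH by (simp add: mult.assoc)
  qed (use Suc in auto)
qed simp

lemma uh_mult_uh_word:
  "uh_mult (uh_word u) f w = (if take (length u) w = u then f (drop (length u) w) else 0)"
proof -
  have take_eq: "take i w = u \<longleftrightarrow> i = length u \<and> take (length u) w = u" if "i \<le> length w" for i
    using that by (auto simp: min_def)
  have "uh_mult (uh_word u) f w = (\<Sum>i\<le>length w. if i = length u then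
           (if take (length u) w = u then f (drop (length u) w) else 0) else 0)"
    unfolding uh_mult_def uh_word_def
  proof (rule sum.cong[OF refl])
    fix i assume "i \<in> {..length w}"
    then show "(if take i w = u then 1 else 0) * f (drop i w) = (if i = length u then
           (if take (length u) w = u then f (drop (length u) w) else 0) else 0)"
      using take_eq[of i] by (cases "i = length u") auto
  qed
  also have "\<dots> = (if take (length u) w = u then f (drop (length u) w) else 0)"
    by (simp add: sum.delta) (metis length_take min.absorb_iff2 order_refl)
  finally show ?thesis .
qed

locale regular_summable =
  fixes d :: int and \<xi> :: "nat \<Rightarrow> int \<Rightarrow> 'k::field_char_0 fps"
  assumes regular: "regular_seq (nat (max d 0)) \<xi>"
    and summable: "summable_seq (nat (max d 0)) \<xi>"
begin

abbreviation "dpos \<equiv> nat (max d 0)"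

definition deg_bound :: "nat \<Rightarrow> nat" where
  "deg_bound m = (SOME D. \<forall>a\<ge>dpos. \<exists>P::'k poly. degree P \<le> D \<and> (\<forall>n. \<xi> a n $ m = poly P (of_int n)))"

lemma deg_bound:
  "dpos \<le> a \<Longrightarrow> \<exists>P::'k poly. degree P \<le> deg_bound m \<and> (\<forall>n. \<xi> a n $ m = poly P (of_int n))"
proof -
  have "\<exists>D. \<forall>a\<ge>dpos. \<exists>P::'k poly. degree P \<le> D \<and> (\<forall>n. \<xi> a n $ m = poly P (of_int n))"
    using regular unfolding regular_seq_def by blast
  from someI_ex[OF this] show "dpos \<le> a \<Longrightarrow> ?thesis" unfolding deg_bound_def by blast
qed

lemma poly_xi_poly:
  assumes "dpos \<le> a"
  shows "\<xi> a n $ m = poly (xi_poly \<xi> a m) (of_int n)"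
proof -
  have "\<exists>P :: 'k poly. \<forall>n. \<xi> a n $ m = poly P (of_int n)" using deg_bound[OF assms] by blast
  from someI_ex[OF this] show ?thesis unfolding xi_poly_def by blast
qed

lemma degree_xi_poly_le: "dpos \<le> a \<Longrightarrow> degree (xi_poly \<xi> a m) \<le> deg_bound m"
proof -
  assume a: "dpos \<le> a"
  then obtain P :: "'k poly" where P: "degree P \<le> deg_bound m" "\<forall>n. \<xi> a n $ m = poly P (of_int n)"
    using deg_bound by blast
  have "xi_poly \<xi> a m = P" by (rule poly_eqI_of_int) (use P(2) poly_xi_poly[OF a] in auto)
  thus ?thesis using P(1) by simp
qed

definition vanish_bound :: "nat \<Rightarrow> nat" where
  "vanish_bound m = max dpos (SOME K. \<forall>a\<ge>max K dpos. \<forall>n. \<xi> a n $ m = 0)"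

lemma dpos_le_vanish_bound: "dpos \<le> vanish_bound m"
  by (simp add: vanish_bound_def)

lemma xi_nth_vanish:
  assumes "vanish_bound m \<le> a"
  shows "\<xi> a n $ m = 0"
proof -
  have "\<exists>K. \<forall>a\<ge>max K dpos. \<forall>n. \<xi> a n $ m = 0" using summable unfolding summable_seq_def by blast
  from someI_ex[OF this] assms show ?thesis unfolding vanish_bound_def by auto
qed

lemma xi_poly_vanish:
  assumes "vanish_bound m \<le> a"
  shows "xi_poly \<xi> a m = 0"
proof (rule poly_eqI_of_int)
  have "dpos \<le> a" using assms dpos_le_vanish_bound[of m] by linarith
  thus "poly (xi_poly \<xi> a m) (of_int n) = poly 0 (of_int n)" for n
    using poly_xi_poly xi_nth_vanish[OF assms] by simp
qed

definition xi_coeff :: "nat \<Rightarrow> nat \<Rightarrow> 'k fps" where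
  "xi_coeff a j = Abs_fps (\<lambda>m. coeff (xi_poly \<xi> a m) j)"

definition ladder_word :: "nat \<Rightarrow> gen list" where
  "ladder_word a = replicate (nat (int a - d)) Xm @ replicate a Xp"

definition term_word :: "nat \<Rightarrow> nat \<Rightarrow> gen list" where
  "term_word a j = ladder_word a @ replicate j Hg"

definition series_term :: "nat \<Rightarrow> gen list \<Rightarrow> 'k fps" where
  "series_term a = uh_mult (uh_word (ladder_word a)) (xi_H \<xi> a)"

lemma partial_sum_eq: "partial_sum d \<xi> N w = (\<Sum>a\<in>{dpos..N}. series_term a w)"
  by (simp add: partial_sum_def series_term_def ladder_word_def)

lemma length_ladder_word: "length (ladder_word a) = nat (int a - d) + a"
  by (simp add: ladder_word_def)

lemma term_word_inject: "term_word a j = term_word a' j' \<Longrightarrow> a = a' \<and> j = j'"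
proof -
  assume h: "term_word a j = term_word a' j'"
  have "length (filter (\<lambda>g. g = Xp) (term_word a j)) = length (filter (\<lambda>g. g = Xp) (term_word a' j'))"
    "length (filter (\<lambda>g. g = Hg) (term_word a j)) = length (filter (\<lambda>g. g = Hg) (term_word a' j'))"
    using h by simp_all
  thus ?thesis by (simp add: term_word_def ladder_word_def filter_replicate)
qed

lemma series_term_eq:
  "series_term a w = (if \<exists>j. w = term_word a j then xi_coeff a (length w - length (ladder_word a)) else 0)"
proof -
  let ?p = "length (ladder_word a)"
  have "(take ?p w = ladder_word a \<and> drop ?p w = replicate (length (drop ?p w)) Hg)
     \<longleftrightarrow> (\<exists>j. w = term_word a j)"
  proof
    assume h: "take ?p w = ladder_word a \<and> drop ?p w = replicate (length (drop ?p w)) Hg"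
    have "w = take ?p w @ drop ?p w" by simp
    also have "\<dots> = term_word a (length (drop ?p w))" using h unfolding term_word_def by metis
    finally show "\<exists>j. w = term_word a j" by blast
  qed (auto simp: term_word_def)
  thus ?thesis unfolding series_term_def uh_mult_uh_word xi_H_def xi_coeff_def by auto
qed

lemma length_term_word: "length (term_word a j) = length (ladder_word a) + j"
  by (simp add: term_word_def)

lemma series_term_term_word: "series_term a (term_word a' j) = (if a = a' then xi_coeff a j else 0)"
  using term_word_inject by (auto simp: series_term_eq length_term_word)

lemma series_term_short: "length w < a \<Longrightarrow> series_term a w = 0"
  by (auto simp: series_term_eq length_term_word length_ladder_word)

lemma series_term_nth_nonzero:
  assumes "dpos \<le> a" "series_term a w $ i \<noteq> 0"
  shows "\<exists>j. w = term_word a j \<and> a < vanish_bound i \<and> j \<le> deg_bound i"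
proof -
  obtain j where w: "w = term_word a j" using assms(2) by (auto simp: series_term_eq split: if_splits)
  hence c: "coeff (xi_poly \<xi> a i) j \<noteq> 0" using assms(2) by (simp add: series_term_term_word xi_coeff_def)
  hence "a < vanish_bound i" using xi_poly_vanish[of i a] by (cases "vanish_bound i \<le> a") auto
  moreover have "j \<le> deg_bound i" using le_degree[OF c] degree_xi_poly_le[OF assms(1), of i] by linarith
  ultimately show ?thesis using w by blast
qed

definition vanish_bound_upto :: "nat \<Rightarrow> nat" where
  "vanish_bound_upto N = (\<Sum>i\<le>N. vanish_bound i)"

definition deg_bound_upto :: "nat \<Rightarrow> nat" where
  "deg_bound_upto N = (\<Sum>i\<le>N. deg_bound i)"

lemma vanish_bound_le_upto: "i \<le> N \<Longrightarrow> vanish_bound i \<le> vanish_bound_upto N"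
  unfolding vanish_bound_upto_def by (rule member_le_sum) auto

lemma deg_bound_le_upto: "i \<le> N \<Longrightarrow> deg_bound i \<le> deg_bound_upto N"
  unfolding deg_bound_upto_def by (rule member_le_sum) auto

text \<open>The truncation point \<open>M w\<close> may depend on the word; this covers both the partial sums
  and the limit below.\<close>

lemma partial_sum_support:
  "{w. \<exists>i\<le>N. partial_sum d \<xi> (M w) w $ i \<noteq> 0}
     \<subseteq> (\<lambda>(a, j). term_word a j) ` ({dpos..<vanish_bound_upto N} \<times> {..deg_bound_upto N})"
proof
  fix w assume "w \<in> {w. \<exists>i\<le>N. partial_sum d \<xi> (M w) w $ i \<noteq> 0}"
  then obtain i where i: "i \<le> N" "(\<Sum>a\<in>{dpos..M w}. series_term a w $ i) \<noteq> 0"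
    by (auto simp: partial_sum_eq fps_sum_nth)
  then obtain a where a: "a \<in> {dpos..M w}" "series_term a w $ i \<noteq> 0"
    by (meson sum.not_neutral_contains_not_neutral)
  then obtain j where "w = term_word a j" "a < vanish_bound i" "j \<le> deg_bound i"
    using series_term_nth_nonzero[of a w i] a by auto
  with a(1) vanish_bound_le_upto[OF i(1)] deg_bound_le_upto[OF i(1)]
  show "w \<in> (\<lambda>(a, j). term_word a j) ` ({dpos..<vanish_bound_upto N} \<times> {..deg_bound_upto N})"
    by force
qed

lemma uh_elem_partial_sum: "uh_elem (\<lambda>w. partial_sum d \<xi> (M w) w)"
  unfolding uh_elem_def
proof
  fix m
  have "{w. partial_sum d \<xi> (M w) w $ m \<noteq> 0} \<subseteq> {w. \<exists>i\<le>m. partial_sum d \<xi> (M w) w $ i \<noteq> 0}"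
    by auto
  also note partial_sum_support[of m M]
  finally show "finite {w. partial_sum d \<xi> (M w) w $ m \<noteq> 0}" by (rule finite_subset) auto
qed

text \<open>Terms of index \<open>a > length w\<close> vanish on \<open>w\<close>, so this is the value of the whole series at \<open>w\<close>.\<close>

definition series_limit :: "gen list \<Rightarrow> 'k fps" where
  "series_limit w = partial_sum d \<xi> (length w) w"

lemma uh_elem_series_limit: "uh_elem series_limit"
  using uh_elem_partial_sum[of length] unfolding series_limit_def[abs_def] .

lemma partial_sum_nth_stable:
  assumes "N1 \<le> N2" "\<And>a. N1 < a \<Longrightarrow> a \<le> N2 \<Longrightarrow> series_term a w $ i = 0"
  shows "partial_sum d \<xi> N1 w $ i = partial_sum d \<xi> N2 w $ i"
proof -
  have "(\<Sum>a\<in>{dpos..N1}. series_term a w $ i) = (\<Sum>a\<in>{dpos..N2}. series_term a w $ i)"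
    by (rule sum.mono_neutral_left) (use assms in auto)
  thus ?thesis by (simp add: partial_sum_eq fps_sum_nth)
qed

lemma series_limit_nth:
  assumes "vanish_bound_upto m \<le> N" "i < m"
  shows "series_limit w $ i = partial_sum d \<xi> N w $ i"
proof -
  let ?M = "max (length w) N"
  have "series_limit w $ i = partial_sum d \<xi> ?M w $ i"
    unfolding series_limit_def by (rule partial_sum_nth_stable) (auto simp: series_term_short)
  moreover have "partial_sum d \<xi> N w $ i = partial_sum d \<xi> ?M w $ i"
  proof (rule partial_sum_nth_stable)
    fix a assume "N < a"
    moreover have "vanish_bound i \<le> vanish_bound_upto m" using vanish_bound_le_upto assms(2) by simp
    ultimately have "vanish_bound i \<le> a" "dpos \<le> a"
      using assms(1) dpos_le_vanish_bound[of i] by linarith+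
    thus "series_term a w $ i = 0" using series_term_nth_nonzero by force
  qed simp
  ultimately show ?thesis by simp
qed

lemma series_limit_split:
  assumes "vanish_bound_upto m \<le> N"
  obtains c where "uh_elem c" "series_limit = (\<lambda>w. partial_sum d \<xi> N w + fps_X ^ m * c w)"
proof
  define c where "c w = Abs_fps (\<lambda>i. (series_limit w - partial_sum d \<xi> N w) $ (i + m))" for w
  show "series_limit = (\<lambda>w. partial_sum d \<xi> N w + fps_X ^ m * c w)"
    by (intro ext fps_ext)
       (auto simp: fps_X_power_mult_nth c_def series_limit_nth[OF assms] not_less)
  have "{w. c w $ i \<noteq> 0}
      \<subseteq> {w. series_limit w $ (i + m) \<noteq> 0} \<union> {w. partial_sum d \<xi> N w $ (i + m) \<noteq> 0}" for i
    by (auto simp: c_def)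
  moreover have "finite {w. series_limit w $ j \<noteq> 0}" "finite {w. partial_sum d \<xi> N w $ j \<noteq> 0}" for j
    using uh_elem_series_limit uh_elem_partial_sum[of "\<lambda>_. N"] by (simp_all add: uh_elem_def)
  ultimately show "uh_elem c" unfolding uh_elem_def by (meson finite_Un finite_subset)
qed

lemma hadic_conv_series_limit:
  "hadic_conv \<psi> (\<lambda>N. uh_mat \<psi> (partial_sum d \<xi> N)) (uh_mat \<psi> series_limit)"
  unfolding hadic_conv_def
proof (intro allI exI[of _ "vanish_bound_upto _"] impI)
  fix m N assume "vanish_bound_upto m \<le> N"
  then obtain c where c: "uh_elem c" and split: "series_limit = (\<lambda>w. partial_sum d \<xi> N w + fps_X ^ m * c w)"
    by (rule series_limit_split)
  have "uh_mat \<psi> series_limit n k l - uh_mat \<psi> (partial_sum d \<xi> N) n k l = fps_X ^ m * uh_mat \<psi> c n k l"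
    for n k l
    unfolding split uh_mat_add_fps_X_power_mult[OF uh_elem_partial_sum[of "\<lambda>_. N"] c] by simp
  moreover have "uh_mat \<psi> c \<in> Uh_psi \<psi>" using c unfolding Uh_psi_def by blast
  ultimately show "\<exists>y\<in>Uh_psi \<psi>. \<forall>n k l.
      uh_mat \<psi> series_limit n k l - uh_mat \<psi> (partial_sum d \<xi> N) n k l = fps_X ^ m * y n k l"
    by blast
qed

lemma word_act_term_word: "word_act \<psi> n (term_word a j) k =
  (if a \<le> k then (of_int (n - 2 * int k) ^ j * (\<Prod>b\<in>{k - a + 1..k}. \<psi> b n), k - a + nat (int a - d))
   else (0, nat (int a - d)))"
  by (cases "a \<le> k")
     (simp_all add: word_act_def term_word_def ladder_word_def foldr_gen_act_replicate_Hg
        foldr_gen_act_replicate_Xp foldr_gen_act_replicate_Xm del: foldr_replicate)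

lemma series_limit_term_word: "dpos \<le> a \<Longrightarrow> series_limit (term_word a j) = xi_coeff a j"
  by (simp add: series_limit_def partial_sum_eq series_term_term_word length_term_word
      length_ladder_word)

text \<open>\<open>\<xi>\<^sup>a(H)\<close> acts on \<open>b\<^sub>k\<close> by \<open>\<xi>\<^sup>a(n-2k)\<close>, up to the h-adic precision \<open>N\<close>.\<close>

lemma sum_xi_coeff_power_nth:
  assumes "dpos \<le> a" "i \<le> N"
  shows "(\<Sum>j\<le>deg_bound_upto N. xi_coeff a j * of_int z ^ j) $ i = \<xi> a z $ i"
proof -
  have deg: "degree (xi_poly \<xi> a i) \<le> deg_bound_upto N"
    using degree_xi_poly_le[OF assms(1), of i] deg_bound_le_upto[OF assms(2)] by linarith
  have "(\<Sum>j\<le>deg_bound_upto N. xi_coeff a j * of_int z ^ j) $ i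
      = (\<Sum>j\<le>deg_bound_upto N. coeff (xi_poly \<xi> a i) j * of_int z ^ j)"
    by (simp add: fps_sum_nth xi_coeff_def fps_of_int[symmetric])
  also have "\<dots> = poly (xi_poly \<xi> a i) (of_int z)"
    unfolding poly_altdef by (rule sum.mono_neutral_right) (use deg in \<open>auto simp: coeff_eq_0\<close>)
  also have "\<dots> = \<xi> a z $ i" using poly_xi_poly[OF assms(1)] by simp
  finally show ?thesis .
qed

lemma uh_mat_series_limit_nth_double_sum:
  assumes "vanish_bound_upto N \<le> K"
  shows "uh_mat \<psi> series_limit n k l $ N = (\<Sum>a\<in>{dpos..<K}. \<Sum>j\<le>deg_bound_upto N.
      if snd (word_act \<psi> n (term_word a j) k) = l
      then (series_limit (term_word a j) * fst (word_act \<psi> n (term_word a j) k)) $ N else 0)"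
proof -
  let ?I = "{dpos..<K} \<times> {..deg_bound_upto N}" and ?h = "\<lambda>(a, j). term_word a j"
  have "{w. \<exists>i\<le>N. series_limit w $ i \<noteq> 0}
      \<subseteq> ?h ` ({dpos..<vanish_bound_upto N} \<times> {..deg_bound_upto N})"
    using partial_sum_support[of N length] by (simp add: series_limit_def)
  also have "\<dots> \<subseteq> ?h ` ?I" using assms by (intro image_mono) auto
  finally have "uh_mat \<psi> series_limit n k l $ N = (\<Sum>w\<in>?h ` ?I.
      if snd (word_act \<psi> n w k) = l then (series_limit w * fst (word_act \<psi> n w k)) $ N else 0)"
    by (intro uh_mat_nth_superset) auto
  also have "\<dots> = (\<Sum>(a, j)\<in>?I. if snd (word_act \<psi> n (term_word a j) k) = l
      then (series_limit (term_word a j) * fst (word_act \<psi> n (term_word a j) k)) $ N else 0)"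
    by (subst sum.reindex) (auto simp: inj_on_def split_def dest: term_word_inject)
  finally show ?thesis by (simp add: sum.cartesian_product)
qed

lemma sum_term_words_nth:
  assumes "dpos \<le> a"
  shows "(\<Sum>j\<le>deg_bound_upto N. if snd (word_act \<psi> n (term_word a j) k) = l
      then (series_limit (term_word a j) * fst (word_act \<psi> n (term_word a j) k)) $ N else 0)
    = (if a \<le> k \<and> int l = int k - d then ((\<Prod>b\<in>{k - a + 1..k}. \<psi> b n) * \<xi> a (n - 2 * int k)) $ N else 0)"
proof (cases "a \<le> k \<and> int l = int k - d")
  case True
  let ?P = "\<Prod>b\<in>{k - a + 1..k}. \<psi> b n"
  have l: "k - a + nat (int a - d) = l" using True assms by linarith
  have "(\<Sum>j\<le>deg_bound_upto N. if snd (word_act \<psi> n (term_word a j) k) = l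
      then (series_limit (term_word a j) * fst (word_act \<psi> n (term_word a j) k)) $ N else 0)
      = (?P * (\<Sum>j\<le>deg_bound_upto N. xi_coeff a j * of_int (n - 2 * int k) ^ j)) $ N"
    using True l
    by (simp add: word_act_term_word series_limit_term_word[OF assms] fps_sum_nth sum_distrib_left
        mult_ac)
  also have "\<dots> = (?P * \<xi> a (n - 2 * int k)) $ N"
    by (rule fps_mult_nth_cong) (rule sum_xi_coeff_power_nth[OF assms])
  finally show ?thesis using True by simp
next
  case False
  have "d \<le> int a" using assms by linarith
  with False show ?thesis by (auto simp: word_act_term_word intro!: sum.neutral)
qed

lemma uh_mat_series_limit:
  "uh_mat \<psi> series_limit n k l = (if int l = int k - d then ltimes \<psi> dpos \<xi> k n else 0)"
proof (rule fps_ext)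
  fix N
  define K where "K = max (vanish_bound_upto N) (Suc k)"
  have K: "vanish_bound_upto N \<le> K" by (simp add: K_def)
  let ?t = "\<lambda>a. ((\<Prod>b\<in>{k - a + 1..k}. \<psi> b n) * \<xi> a (n - 2 * int k)) $ N"
  have "uh_mat \<psi> series_limit n k l $ N
      = (\<Sum>a\<in>{dpos..<K}. if a \<le> k \<and> int l = int k - d then ?t a else 0)"
    unfolding uh_mat_series_limit_nth_double_sum[OF K]
    by (intro sum.cong refl sum_term_words_nth) simp
  also have "\<dots> = (if int l = int k - d then \<Sum>a\<in>{dpos..k}. ?t a else 0)"
    by (cases "int l = int k - d") (auto intro!: sum.mono_neutral_cong_right simp: K_def)
  finally show "uh_mat \<psi> series_limit n k l $ N
      = (if int l = int k - d then ltimes \<psi> dpos \<xi> k n else 0) $ N"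
    by (simp add: ltimes_def fps_sum_nth)
qed

end

theorem mainTheorem5:
  fixes \<psi> :: "nat \<Rightarrow> int \<Rightarrow> 'k::field_char_0 fps"
    and d :: int
    and \<xi> :: "nat \<Rightarrow> int \<Rightarrow> 'k fps"
  assumes "colouring \<psi>"
    and "regular_seq (nat (max d 0)) \<xi>"
    and "summable_seq (nat (max d 0)) \<xi>"
  shows "(\<exists>!x. x \<in> Uh_psi \<psi> \<and> hadic_conv \<psi> (\<lambda>N. uh_mat \<psi> (partial_sum d \<xi> N)) x)
       \<and> (\<forall>x. x \<in> Uh_psi \<psi> \<and> hadic_conv \<psi> (\<lambda>N. uh_mat \<psi> (partial_sum d \<xi> N)) x \<longrightarrow>
            of_degree x d \<and>
            (\<forall>k n. k \<ge> nat (max d 0) \<longrightarrow>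
               ltimes \<psi> (nat (max d 0)) \<xi> k n = psi_of x d k n))"
proof -
  interpret regular_summable d \<xi> using assms(2,3) by unfold_locales
  let ?S = "\<lambda>N. uh_mat \<psi> (partial_sum d \<xi> N)" and ?x = "uh_mat \<psi> series_limit"
  have x: "?x \<in> Uh_psi \<psi>" using uh_elem_series_limit unfolding Uh_psi_def by blast
  have unique: "x = ?x" if "hadic_conv \<psi> ?S x" for x
    using hadic_conv_unique hadic_conv_series_limit that by blast
  have "of_degree ?x d"
    unfolding of_degree_def uh_mat_series_limit by (auto simp: ltimes_def)
  moreover have "ltimes \<psi> dpos \<xi> k n = psi_of ?x d k n" if "dpos \<le> k" for k n
    using that unfolding psi_of_def uh_mat_series_limit by simp
  ultimately show ?thesis using x hadic_conv_series_limit unique by blast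
qed

end
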